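(* Let $[X,d,m]$ be a metric random walk space with invariant and reversible probability measure $\nu$. Then $h_m(X)=\lambda_1^m(X)$, where $$h_m(X)=\inf\Big\{\frac{P_m(D)}{\min\{\nu(D),\nu(X\setminus D)\}}: D\subset X \ \nu\text{-measurable},\ 0<\nu(D)<1\Big\},$$ $$\lambda_1^m(X)=\inf\big\{TV_m(u): u\in L^1(X,\nu),\ \|u\|_{L^1(X,\nu)}=1,\ 0\in{\rm med}_\nu(u)\big\}.$$
   Context: A metric random walk space $[X,d,m]$ is a Polish metric space $(X,d)$ with a family $m=(m_x)_{x\in X}$ of Borel probability measures, $x\mapsto m_x(A)$ Borel measurable, each with finite first moment. A Radon measure $\nu$ is invariant if $\nu(A)=\int_X m_x(A)d\nu(x)$ for all $\nu$-measurable $A$, reversible if $dm_x(y)d\nu(x)=dm_y(x)d\nu(y)$. The $m$-perimeter is $P_m(E)=\int_E\int_{X\setminus E}dm_x(y)d\nu(x)$ and the $m$-total variation is $TV_m(u)=\frac12\int_X\int_X|u(y)-u(x)|\,dm_x(y)d\nu(x)$. A number $\mu$ is a median of $u$ with respect to $\nu$, written $\mu\in{\rm med}_\nu(u)$, if $\nu(\{u<\mu\})\le\frac12\nu(X)$ and $\nu(\{u>\mu\})\le\frac12\nu(X)$. *)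

theory Defs
  imports "HOL-Probability.Probability"
begin

definition mrw_space :: "('a::{polish_space,metric_space} \<Rightarrow> 'a measure) \<Rightarrow> bool" where
  "mrw_space m \<longleftrightarrow>
     (\<forall>x. prob_space (m x) \<and> sets (m x) = sets borel) \<and>
     (\<forall>A \<in> sets borel. (\<lambda>x. emeasure (m x) A) \<in> borel_measurable borel) \<and>
     (\<forall>x. (\<integral>\<^sup>+ y. ennreal (dist x y) \<partial>m x) < \<infinity>)"

definition invariant_measure :: "('a::topological_space \<Rightarrow> 'a measure) \<Rightarrow> 'a measure \<Rightarrow> bool" where
  "invariant_measure m \<nu> \<longleftrightarrow>
     (\<forall>A \<in> sets \<nu>. emeasure \<nu> A = (\<integral>\<^sup>+ x. emeasure (m x) A \<partial>\<nu>))"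

text \<open>Reversibility dm_x(y) d\<nu>(x) = dm_y(x) d\<nu>(y), as equality of the two measures on
  X \<times> X, tested on measurable rectangles A \<times> B.\<close>
definition reversible_measure :: "('a::topological_space \<Rightarrow> 'a measure) \<Rightarrow> 'a measure \<Rightarrow> bool" where
  "reversible_measure m \<nu> \<longleftrightarrow>
     (\<forall>A \<in> sets \<nu>. \<forall>B \<in> sets \<nu>.
        (\<integral>\<^sup>+ x. indicator A x * emeasure (m x) B \<partial>\<nu>) =
        (\<integral>\<^sup>+ x. indicator B x * emeasure (m x) A \<partial>\<nu>))"

definition m_perimeter :: "('a \<Rightarrow> 'a measure) \<Rightarrow> 'a measure \<Rightarrow> 'a set \<Rightarrow> ennreal" where
  "m_perimeter m \<nu> E = (\<integral>\<^sup>+ x. indicator E x * emeasure (m x) (UNIV - E) \<partial>\<nu>)"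

definition m_TV :: "('a \<Rightarrow> 'a measure) \<Rightarrow> 'a measure \<Rightarrow> ('a \<Rightarrow> real) \<Rightarrow> ennreal" where
  "m_TV m \<nu> u = (\<integral>\<^sup>+ x. (\<integral>\<^sup>+ y. ennreal \<bar>u y - u x\<bar> \<partial>m x) \<partial>\<nu>) / 2"

definition is_median :: "'a measure \<Rightarrow> ('a \<Rightarrow> real) \<Rightarrow> real \<Rightarrow> bool" where
  "is_median \<nu> u \<mu> \<longleftrightarrow>
     measure \<nu> {x \<in> space \<nu>. u x < \<mu>} \<le> measure \<nu> (space \<nu>) / 2 \<and>
     measure \<nu> {x \<in> space \<nu>. u x > \<mu>} \<le> measure \<nu> (space \<nu>) / 2"

text \<open>Cheeger constant h_m(X) (inf over the empty set is \<infinity>).\<close>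
definition cheeger_const :: "('a \<Rightarrow> 'a measure) \<Rightarrow> 'a measure \<Rightarrow> ennreal" where
  "cheeger_const m \<nu> =
     (INF D \<in> {D \<in> sets \<nu>. 0 < measure \<nu> D \<and> measure \<nu> D < 1}.
        m_perimeter m \<nu> D / ennreal (min (measure \<nu> D) (measure \<nu> (space \<nu> - D))))"

definition lambda1 :: "('a \<Rightarrow> 'a measure) \<Rightarrow> 'a measure \<Rightarrow> ennreal" where
  "lambda1 m \<nu> =
     (INF u \<in> {u. u \<in> borel_measurable \<nu> \<and> integrable \<nu> u \<and>
                  (\<integral>x. \<bar>u x\<bar> \<partial>\<nu>) = 1 \<and> is_median \<nu> u 0}.
        m_TV m \<nu> u)"

end

theory Submission
  imports Defs
begin

(* Writing |u(y) - u(x)| as the Lebesgue measure of the t separating u(x) and u(y) and applying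
  Tonelli gives the coarea formula TV_m(u) = \<integral> TV_m(1_{u > t}) dt, where
  TV_m(1_E) = (P_m(E) + P_m(X - E))/2 \<ge> h_m(X) min(\<nu>(E), \<nu>(X - E)).
  If 0 is a median of u, this minimum is at least the measure of the x for which t lies between
  0 and u(x), and integrating over t gives h_m(X) \<parallel>u\<parallel>_1 \<le> TV_m(u).
  Conversely, for \<nu>(E) \<le> 1/2 the function 1_E / \<nu>(E) is admissible for \<lambda>_1 and, by
  reversibility, has total variation P_m(E) / \<nu>(E); a set of measure above 1/2 is replaced by its
  complement, which has the same perimeter. *)

lemma space_eq_UNIV_if_sets_eq_borel: "sets \<nu> = sets borel \<Longrightarrow> space \<nu> = UNIV"
  using sets_eq_imp_space_eq by fastforce

lemma nn_integral_abs_indicator_lessThan_diff: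
  fixes a b :: real
  shows "(\<integral>\<^sup>+t. ennreal \<bar>indicator {..<b} t - indicator {..<a} t\<bar> \<partial>lborel) = ennreal \<bar>b - a\<bar>"
proof -
  have "ennreal \<bar>indicator {..<b} t - indicator {..<a} t\<bar> = indicator {min a b..<max a b} t" for t
    by (auto simp: indicator_def)
  then show ?thesis
    by (simp add: max_def min_def abs_if)
qed

lemma m_perimeter_compl:
  assumes "reversible_measure m \<nu>" and "E \<in> sets \<nu>" and "UNIV - E \<in> sets \<nu>"
  shows "m_perimeter m \<nu> (UNIV - E) = m_perimeter m \<nu> E"
  using assms unfolding reversible_measure_def m_perimeter_def by (simp add: double_diff)

lemma cheeger_const_mult_min_le:
  assumes "prob_space \<nu>" and "E \<in> sets \<nu>"
  shows "cheeger_const m \<nu> * ennreal (min (measure \<nu> E) (measure \<nu> (space \<nu> - E)))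
    \<le> m_perimeter m \<nu> E"
proof (cases "min (measure \<nu> E) (measure \<nu> (space \<nu> - E)) = 0")
  case False
  interpret prob_space \<nu> by fact
  define c where "c = min (measure \<nu> E) (measure \<nu> (space \<nu> - E))"
  have "0 < c"
    using False by (simp add: c_def order_less_le)
  then have "0 < measure \<nu> E" "measure \<nu> E < 1"
    using prob_compl[OF \<open>E \<in> sets \<nu>\<close>] by (auto simp: c_def)
  then have "cheeger_const m \<nu> \<le> m_perimeter m \<nu> E / ennreal c"
    unfolding cheeger_const_def c_def by (intro INF_lower) (simp add: \<open>E \<in> sets \<nu>\<close>)
  then have "cheeger_const m \<nu> * ennreal c \<le> m_perimeter m \<nu> E / ennreal c * ennreal c"
    by (rule mult_right_mono) simp
  also have "\<dots> = m_perimeter m \<nu> E"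
    using \<open>0 < c\<close> by (simp add: ennreal_divide_times)
  finally show ?thesis
    unfolding c_def .
qed simp

lemma nn_integral_abs_eq_level_sets:
  assumes "sigma_finite_measure \<nu>" and [measurable]: "u \<in> borel_measurable \<nu>"
  shows "(\<integral>\<^sup>+x. ennreal \<bar>u x\<bar> \<partial>\<nu>)
    = (\<integral>\<^sup>+t. \<integral>\<^sup>+x. ennreal \<bar>indicator {x. t < u x} x - indicator {..<0} t\<bar> \<partial>\<nu> \<partial>lborel)"
proof -
  interpret pair_sigma_finite \<nu> lborel
    by (intro pair_sigma_finite.intro assms(1) lborel.sigma_finite_measure_axioms)
  have "ennreal \<bar>u x\<bar> = (\<integral>\<^sup>+t. ennreal \<bar>indicator {x. t < u x} x - indicator {..<0} t\<bar> \<partial>lborel)" for x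
    using nn_integral_abs_indicator_lessThan_diff[of "u x" 0] by (simp add: indicator_def)
  then show ?thesis
    by (simp add: Fubini' indicator_def)
qed

lemma median_zero_level_set_le_min:
  assumes "prob_space \<nu>" and [measurable]: "u \<in> borel_measurable \<nu>" and "is_median \<nu> u 0"
  shows "(\<integral>\<^sup>+x. ennreal \<bar>indicator {x. t < u x} x - indicator {..<0} t\<bar> \<partial>\<nu>)
    \<le> ennreal (min (measure \<nu> {x \<in> space \<nu>. t < u x})
                      (measure \<nu> (space \<nu> - {x \<in> space \<nu>. t < u x})))"
proof -
  interpret prob_space \<nu> by fact
  define S where "S = {x \<in> space \<nu>. t < u x}"
  have [measurable]: "S \<in> sets \<nu>"
    unfolding S_def by measurable
  have compl: "measure \<nu> (space \<nu> - S) = 1 - measure \<nu> S"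
    by (rule prob_compl) measurable
  have pos: "measure \<nu> {x \<in> space \<nu>. 0 < u x} \<le> 1/2"
    and neg: "measure \<nu> {x \<in> space \<nu>. u x < 0} \<le> 1/2"
    using \<open>is_median \<nu> u 0\<close> by (auto simp: is_median_def prob_space)
  show ?thesis
  proof (cases "0 \<le> t")
    case True
    have small: "measure \<nu> S \<le> measure \<nu> {x \<in> space \<nu>. 0 < u x}"
      using True by (intro finite_measure_mono) (auto simp: S_def)
    have "ennreal \<bar>indicator {x. t < u x} x - indicator {..<0} t\<bar> = indicator S x"
      if "x \<in> space \<nu>" for x
      using True that by (simp add: S_def indicator_def)
    then have integral:
        "(\<integral>\<^sup>+x. ennreal \<bar>indicator {x. t < u x} x - indicator {..<0} t\<bar> \<partial>\<nu>) = emeasure \<nu> S"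
      by (simp cong: nn_integral_cong)
    show ?thesis
      using small integral pos compl by (simp add: S_def emeasure_eq_measure)
  next
    case False
    have small: "measure \<nu> (space \<nu> - S) \<le> measure \<nu> {x \<in> space \<nu>. u x < 0}"
      using False by (intro finite_measure_mono) (auto simp: S_def)
    have "ennreal \<bar>indicator {x. t < u x} x - indicator {..<0} t\<bar> = indicator (space \<nu> - S) x"
      if "x \<in> space \<nu>" for x
      using False that by (simp add: S_def indicator_def)
    then have integral:
        "(\<integral>\<^sup>+x. ennreal \<bar>indicator {x. t < u x} x - indicator {..<0} t\<bar> \<partial>\<nu>) = emeasure \<nu> (space \<nu> - S)"
      by (simp cong: nn_integral_cong)
    show ?thesis
      using small integral neg compl by (simp add: S_def emeasure_eq_measure)
  qed
qed

locale metric_random_walk =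
  fixes m :: "'a::{polish_space,metric_space} \<Rightarrow> 'a measure"
  assumes mrw_space: "mrw_space m"
begin

lemma prob_space_m: "prob_space (m x)"
  using mrw_space by (simp add: mrw_space_def)

lemma measurable_m [measurable]: "m \<in> borel \<rightarrow>\<^sub>M subprob_algebra borel"
  using mrw_space
  by (intro measurable_subprob_algebra) (auto simp: mrw_space_def prob_space_imp_subprob_space)

lemma m_TV_cmult:
  assumes [measurable_cong]: "sets \<nu> = sets borel" and [measurable]: "u \<in> borel_measurable borel"
  shows "m_TV m \<nu> (\<lambda>x. c * u x) = ennreal \<bar>c\<bar> * m_TV m \<nu> u"
proof -
  have "ennreal \<bar>c * u y - c * u x\<bar> = ennreal \<bar>c\<bar> * ennreal \<bar>u y - u x\<bar>" for x y
    by (simp add: abs_mult ennreal_mult flip: right_diff_distrib)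
  then have "(\<integral>\<^sup>+y. ennreal \<bar>c * u y - c * u x\<bar> \<partial>m x)
      = ennreal \<bar>c\<bar> * (\<integral>\<^sup>+y. ennreal \<bar>u y - u x\<bar> \<partial>m x)" for x
    by (simp add: nn_integral_cmult)
  moreover have "(\<lambda>x. \<integral>\<^sup>+y. ennreal \<bar>u y - u x\<bar> \<partial>m x) \<in> borel_measurable \<nu>"
    by (rule nn_integral_measurable_subprob_algebra2) measurable
  ultimately show ?thesis
    unfolding m_TV_def by (simp add: nn_integral_cmult ennreal_times_divide)
qed

lemma m_TV_indicator:
  assumes [measurable_cong]: "sets \<nu> = sets borel" and [measurable]: "E \<in> sets borel"
  shows "m_TV m \<nu> (indicator E) = (m_perimeter m \<nu> E + m_perimeter m \<nu> (UNIV - E)) / 2"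
proof -
  have "ennreal \<bar>indicator E y - indicator E x\<bar>
      = indicator E x * indicator (UNIV - E) y + indicator (UNIV - E) x * indicator E y" for x y :: 'a
    by (simp add: indicator_def)
  then have "(\<integral>\<^sup>+y. ennreal \<bar>indicator E y - indicator E x\<bar> \<partial>m x)
      = indicator E x * emeasure (m x) (UNIV - E) + indicator (UNIV - E) x * emeasure (m x) E" for x
    by (simp add: nn_integral_add nn_integral_cmult_indicator del: Compl_eq_Diff_UNIV)
  then show ?thesis
    unfolding m_TV_def m_perimeter_def
    by (simp add: nn_integral_add double_diff del: Compl_eq_Diff_UNIV)
qed

lemma m_TV_indicator_eq_m_perimeter:
  assumes "sets \<nu> = sets borel" and "reversible_measure m \<nu>" and "E \<in> sets borel"
  shows "m_TV m \<nu> (indicator E) = m_perimeter m \<nu> E"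
  using m_TV_indicator[OF assms(1,3)] m_perimeter_compl[OF assms(2)] assms(1,3)
    ennreal_mult_divide_eq[of 2 "m_perimeter m \<nu> E"]
  by (simp add: mult_2_right)

lemma m_TV_coarea:
  assumes "sigma_finite_measure \<nu>" and [measurable_cong]: "sets \<nu> = sets borel"
    and [measurable]: "u \<in> borel_measurable borel"
  shows "m_TV m \<nu> u = (\<integral>\<^sup>+t. m_TV m \<nu> (indicator {x. t < u x}) \<partial>lborel)"
proof -
  define G where "G x y t = ennreal \<bar>indicator {x. t < u x} y - indicator {x. t < u x} x\<bar>" for x y t
  interpret \<nu>: pair_sigma_finite \<nu> lborel
    by (intro pair_sigma_finite.intro assms(1) lborel.sigma_finite_measure_axioms)
  have "(\<lambda>p. \<integral>\<^sup>+y. G (fst p) y (snd p) \<partial>m (fst p)) \<in> borel_measurable (\<nu> \<Otimes>\<^sub>M lborel)"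
    by (rule nn_integral_measurable_subprob_algebra2[where N = borel]) (unfold G_def indicator_def, measurable)
  then have F_measurable [measurable]:
      "(\<lambda>(x, t). \<integral>\<^sup>+y. G x y t \<partial>m x) \<in> borel_measurable (\<nu> \<Otimes>\<^sub>M lborel)"
    by (simp add: case_prod_beta')
  have "ennreal \<bar>u y - u x\<bar> = (\<integral>\<^sup>+t. G x y t \<partial>lborel)" for x y
    using nn_integral_abs_indicator_lessThan_diff[of "u y" "u x"]
    by (simp add: G_def indicator_def)
  moreover have "(\<integral>\<^sup>+y. \<integral>\<^sup>+t. G x y t \<partial>lborel \<partial>m x) = (\<integral>\<^sup>+t. \<integral>\<^sup>+y. G x y t \<partial>m x \<partial>lborel)" for x
  proof -
    interpret pair_sigma_finite "m x" lborel
      by (intro pair_sigma_finite.intro prob_space_imp_sigma_finite prob_space_m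
          lborel.sigma_finite_measure_axioms)
    show ?thesis
      by (rule Fubini'[symmetric]) (unfold G_def indicator_def, measurable)
  qed
  moreover have "(\<integral>\<^sup>+x. \<integral>\<^sup>+t. \<integral>\<^sup>+y. G x y t \<partial>m x \<partial>lborel \<partial>\<nu>)
      = (\<integral>\<^sup>+t. \<integral>\<^sup>+x. \<integral>\<^sup>+y. G x y t \<partial>m x \<partial>\<nu> \<partial>lborel)"
    by (rule \<nu>.Fubini'[symmetric]) measurable
  moreover have "(\<lambda>t. \<integral>\<^sup>+x. \<integral>\<^sup>+y. G x y t \<partial>m x \<partial>\<nu>) \<in> borel_measurable lborel"
    by measurable
  ultimately show ?thesis
    unfolding m_TV_def G_def by (simp add: nn_integral_divide)
qed

lemma cheeger_const_mult_min_le_m_TV_indicator: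
  assumes "prob_space \<nu>" and "sets \<nu> = sets borel" and "E \<in> sets borel"
  shows "cheeger_const m \<nu> * ennreal (min (measure \<nu> E) (measure \<nu> (UNIV - E)))
    \<le> m_TV m \<nu> (indicator E)"
proof -
  define c where "c = cheeger_const m \<nu> * ennreal (min (measure \<nu> E) (measure \<nu> (UNIV - E)))"
  have "space \<nu> = UNIV"
    using assms(2) by (rule space_eq_UNIV_if_sets_eq_borel)
  then have "c \<le> m_perimeter m \<nu> E" and "c \<le> m_perimeter m \<nu> (UNIV - E)"
    using cheeger_const_mult_min_le[OF assms(1), of E m]
      cheeger_const_mult_min_le[OF assms(1), of "UNIV - E" m] assms(2,3)
    by (simp_all add: c_def double_diff min.commute)
  then have "(c + c) / 2 \<le> m_TV m \<nu> (indicator E)"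
    unfolding m_TV_indicator[OF assms(2,3)] by (intro divide_right_mono_ennreal add_mono)
  then show ?thesis
    using ennreal_mult_divide_eq[of 2 c] by (simp add: c_def mult_2_right)
qed

lemma cheeger_const_le_m_TV:
  assumes "prob_space \<nu>" and [measurable_cong]: "sets \<nu> = sets borel"
    and [measurable]: "u \<in> borel_measurable \<nu>" and "integrable \<nu> u"
    and "(\<integral>x. \<bar>u x\<bar> \<partial>\<nu>) = 1" and "is_median \<nu> u 0"
  shows "cheeger_const m \<nu> \<le> m_TV m \<nu> u"
proof -
  interpret prob_space \<nu> by fact
  define h where "h = cheeger_const m \<nu>"
  define L where "L t = (\<integral>\<^sup>+x. ennreal \<bar>indicator {x. t < u x} x - indicator {..<0} t\<bar> \<partial>\<nu>)" for t
  have "space \<nu> = UNIV"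
    using assms(2) by (rule space_eq_UNIV_if_sets_eq_borel)
  have [measurable]: "u \<in> borel_measurable borel"
    using assms(3) by (simp add: measurable_cong_sets[OF assms(2) refl])
  have "(\<integral>\<^sup>+x. ennreal \<bar>u x\<bar> \<partial>\<nu>) = 1"
    using assms(4,5) by (simp add: nn_integral_eq_integral)
  then have "h = h * (\<integral>\<^sup>+t. L t \<partial>lborel)"
    using nn_integral_abs_eq_level_sets[OF sigma_finite_measure_axioms assms(3)] by (simp add: L_def)
  also have "\<dots> = (\<integral>\<^sup>+t. h * L t \<partial>lborel)"
    unfolding L_def by (rule nn_integral_cmult[symmetric]) (unfold indicator_def, measurable)
  also have "\<dots> \<le> (\<integral>\<^sup>+t. m_TV m \<nu> (indicator {x. t < u x}) \<partial>lborel)"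
  proof (rule nn_integral_mono)
    fix t
    have "h * L t \<le> h * ennreal (min (measure \<nu> {x. t < u x}) (measure \<nu> (UNIV - {x. t < u x})))"
      using median_zero_level_set_le_min[OF prob_space_axioms assms(3,6), of t] \<open>space \<nu> = UNIV\<close>
      by (intro mult_left_mono) (simp_all add: L_def)
    also have "\<dots> \<le> m_TV m \<nu> (indicator {x. t < u x})"
      unfolding h_def
      by (rule cheeger_const_mult_min_le_m_TV_indicator[OF prob_space_axioms assms(2)]) simp
    finally show "h * L t \<le> m_TV m \<nu> (indicator {x. t < u x})" .
  qed
  also have "\<dots> = m_TV m \<nu> u"
    by (rule m_TV_coarea[symmetric]) (simp_all add: sigma_finite_measure_axioms assms(2))
  finally show ?thesis
    unfolding h_def .
qed

lemma cheeger_const_le_lambda1: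
  assumes "prob_space \<nu>" and "sets \<nu> = sets borel"
  shows "cheeger_const m \<nu> \<le> lambda1 m \<nu>"
  unfolding lambda1_def using cheeger_const_le_m_TV[OF assms] by (intro INF_greatest) auto

lemma lambda1_le_cheeger_quotient:
  assumes "prob_space \<nu>" and [measurable_cong]: "sets \<nu> = sets borel" and "reversible_measure m \<nu>"
    and [measurable]: "E \<in> sets borel" and "0 < measure \<nu> E" and "measure \<nu> E \<le> 1/2"
  shows "lambda1 m \<nu> \<le> m_perimeter m \<nu> E / ennreal (measure \<nu> E)"
proof -
  interpret prob_space \<nu> by fact
  define c where "c = measure \<nu> E"
  define v where "v x = 1 / c * indicator E x" for x
  have "0 < c"
    using assms(5) by (simp add: c_def)
  have "space \<nu> = UNIV"
    using assms(2) by (rule space_eq_UNIV_if_sets_eq_borel)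
  have [measurable]: "v \<in> borel_measurable \<nu>"
    unfolding v_def by measurable
  moreover have "integrable \<nu> v"
    unfolding v_def
    by (intro integrable_mult_right integrable_real_indicator) (auto simp: less_top[symmetric])
  moreover have "(\<integral>x. \<bar>v x\<bar> \<partial>\<nu>) = 1"
    using \<open>0 < c\<close> by (simp add: v_def c_def abs_mult)
  moreover have "is_median \<nu> v 0"
    using \<open>0 < c\<close> prob_space[unfolded \<open>space \<nu> = UNIV\<close>] \<open>space \<nu> = UNIV\<close> assms(6)
    by (simp add: is_median_def v_def indicator_def c_def)
  ultimately have "lambda1 m \<nu> \<le> m_TV m \<nu> v"
    unfolding lambda1_def by (intro INF_lower) simp
  also have "\<dots> = ennreal \<bar>1 / c\<bar> * m_TV m \<nu> (indicator E)"
    unfolding v_def by (rule m_TV_cmult[OF assms(2)]) simp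
  also have "\<dots> = ennreal (1 / c) * m_perimeter m \<nu> E"
    using \<open>0 < c\<close> by (simp add: m_TV_indicator_eq_m_perimeter[OF assms(2,3,4)])
  also have "\<dots> = m_perimeter m \<nu> E / ennreal c"
    using \<open>0 < c\<close> by (simp add: divide_ennreal[symmetric] ennreal_times_divide mult.commute)
  finally show ?thesis
    unfolding c_def .
qed

lemma lambda1_le_cheeger_const:
  assumes "prob_space \<nu>" and "sets \<nu> = sets borel" and "reversible_measure m \<nu>"
  shows "lambda1 m \<nu> \<le> cheeger_const m \<nu>"
  unfolding cheeger_const_def
proof (rule INF_greatest)
  interpret prob_space \<nu> by fact
  fix D
  assume "D \<in> {D \<in> sets \<nu>. 0 < measure \<nu> D \<and> measure \<nu> D < 1}"
  then have D: "D \<in> sets borel" "0 < measure \<nu> D" "measure \<nu> D < 1"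
    using assms(2) by auto
  have "space \<nu> = UNIV"
    using assms(2) by (rule space_eq_UNIV_if_sets_eq_borel)
  then have compl: "measure \<nu> (space \<nu> - D) = 1 - measure \<nu> D" "space \<nu> - D = UNIV - D"
    using prob_compl[of D] D(1) assms(2) by auto
  show "lambda1 m \<nu> \<le> m_perimeter m \<nu> D / ennreal (min (measure \<nu> D) (measure \<nu> (space \<nu> - D)))"
  proof (cases "measure \<nu> D \<le> 1/2")
    case True
    then show ?thesis
      using lambda1_le_cheeger_quotient[OF assms D(1,2)] compl by simp
  next
    case False
    then have "lambda1 m \<nu> \<le> m_perimeter m \<nu> (UNIV - D) / ennreal (measure \<nu> (UNIV - D))"
      using D compl by (intro lambda1_le_cheeger_quotient[OF assms]) auto
    then show ?thesis
      using False compl m_perimeter_compl[OF assms(3), of D] D(1) assms(2) by simp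
  qed
qed

end

theorem theorem3p11:
  fixes m :: "'a::{polish_space,metric_space} \<Rightarrow> 'a measure" and \<nu> :: "'a measure"
  assumes "mrw_space m"
    and "prob_space \<nu>" and "sets \<nu> = sets borel"
    and "invariant_measure m \<nu>" and "reversible_measure m \<nu>"
  shows "cheeger_const m \<nu> = lambda1 m \<nu>"
proof -
  interpret metric_random_walk m by standard fact
  show ?thesis
    using cheeger_const_le_lambda1[OF assms(2,3)] lambda1_le_cheeger_const[OF assms(2,3,5)]
    by (rule antisym)
qed

end
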